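(* Let $P\mapsto\nu_P(\cdot\mid x)$ be a rule assigning to each observed-data law $P$ of $O=(X,A,W,Y)$ a conditional distribution on $W$ given $X=x$, and suppose the rule is outcome-free: whenever $P_{XAW}=P'_{XAW}$ (equal marginal laws of $(X,A,W)$), $\nu_P(\cdot\mid x)=\nu_{P'}(\cdot\mid x)$ for $P_X$-almost every $x$. Define $\Psi_\nu(P):=\mathbb{E}_P\!\left[\int\Delta(w,X)\,\mathrm{d}\nu_P(w\mid X)\right]$. If $\Psi_\nu(P)=\theta_{\mathrm{ATE}}$ for every confounder-model law $P$ satisfying positivity and the confounder-model assumptions, then for every observed-data law $P$ satisfying positivity, $\nu_P(\cdot\mid X)=F_{W\mid X}(\cdot\mid X)$ $P$-almost surely, and consequently $\Psi_\nu(P)=\mathbb{E}_P\{\Delta(W,X)\}=\psi(P)$. Hence $\psi(P)$ is the unique functional of the form $P\mapsto\mathbb{E}_P[\int\Delta(w,X)\,\mathrm{d}\nu_P(w\mid X)]$ with $\nu_P$ outcome-free that coincides with the average treatment effect under the confounder model.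
   Context: $A\in\{0,1\}$; $Q(a,w,x)=\mathbb{E}_P(Y\mid A=a,W=w,X=x)$, $\Delta(w,x)=Q(1,w,x)-Q(0,w,x)$, $\psi(P)=\mathbb{E}_P\{\Delta(W,X)\}$; $F_{W\mid X}$ is the conditional law of $W$ given $X$ under $P$. Positivity: $0<\mathbb{P}(A=1\mid X=x,W=w)<1$ for $P$-a.e. $(x,w)$. Confounder-model assumptions ($W$ pre-exposure, potential outcomes $Y^{(0)},Y^{(1)}$): if $A=a$ then $Y=Y^{(a)}$ a.s.; $Y^{(a)}\perp\!\!\!\perp A\mid(X,W)$ for $a\in\{0,1\}$; $\theta_{\mathrm{ATE}}=\mathbb{E}\{Y^{(1)}-Y^{(0)}\}$. *)

theory Defs
  imports "HOL-Probability.Probability"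
begin

text \<open>Observed data O = (X, A, W, Y) with A :: bool (True = 1, False = 0).
  Full data (X, A, W, Y, Y0, Y1) adds the potential outcomes.\<close>

type_synonym ('x,'w) obs = "'x \<times> bool \<times> 'w \<times> real"
type_synonym ('x,'w) full = "'x \<times> bool \<times> 'w \<times> real \<times> real \<times> real"

definition obsM :: "('x::topological_space, 'w::topological_space) obs measure" where
  "obsM = borel \<Otimes>\<^sub>M (count_space UNIV \<Otimes>\<^sub>M (borel \<Otimes>\<^sub>M borel))"

definition XAWM :: "('x::topological_space \<times> bool \<times> 'w::topological_space) measure" where
  "XAWM = borel \<Otimes>\<^sub>M (count_space UNIV \<Otimes>\<^sub>M borel)"

definition fullM :: "('x::topological_space, 'w::topological_space) full measure" where
  "fullM = borel \<Otimes>\<^sub>M (count_space UNIV \<Otimes>\<^sub>M (borel \<Otimes>\<^sub>M (borel \<Otimes>\<^sub>M (borel \<Otimes>\<^sub>M borel))))"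

definition oX :: "('x,'w) obs \<Rightarrow> 'x" where "oX = (\<lambda>(x,a,w,y). x)"
definition oA :: "('x,'w) obs \<Rightarrow> bool" where "oA = (\<lambda>(x,a,w,y). a)"
definition oW :: "('x,'w) obs \<Rightarrow> 'w" where "oW = (\<lambda>(x,a,w,y). w)"
definition oY :: "('x,'w) obs \<Rightarrow> real" where "oY = (\<lambda>(x,a,w,y). y)"
definition oXAW :: "('x,'w) obs \<Rightarrow> 'x \<times> bool \<times> 'w" where "oXAW = (\<lambda>(x,a,w,y). (x,a,w))"

definition fX :: "('x,'w) full \<Rightarrow> 'x" where "fX = (\<lambda>(x,a,w,y,y0,y1). x)"
definition fA :: "('x,'w) full \<Rightarrow> bool" where "fA = (\<lambda>(x,a,w,y,y0,y1). a)"
definition fW :: "('x,'w) full \<Rightarrow> 'w" where "fW = (\<lambda>(x,a,w,y,y0,y1). w)"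
definition fY :: "('x,'w) full \<Rightarrow> real" where "fY = (\<lambda>(x,a,w,y,y0,y1). y)"
definition fY0 :: "('x,'w) full \<Rightarrow> real" where "fY0 = (\<lambda>(x,a,w,y,y0,y1). y0)"
definition fY1 :: "('x,'w) full \<Rightarrow> real" where "fY1 = (\<lambda>(x,a,w,y,y0,y1). y1)"
definition obs_of :: "('x,'w) full \<Rightarrow> ('x,'w) obs" where
  "obs_of = (\<lambda>(x,a,w,y,y0,y1). (x,a,w,y))"

definition cond_exp_version ::
  "'a measure \<Rightarrow> 'b measure \<Rightarrow> ('a \<Rightarrow> 'b) \<Rightarrow> ('a \<Rightarrow> real) \<Rightarrow> ('b \<Rightarrow> real) \<Rightarrow> bool" where
  "cond_exp_version M N g f h \<longleftrightarrow>
     h \<in> borel_measurable N \<and> integrable M (\<lambda>\<omega>. h (g \<omega>)) \<and>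
     (\<forall>S\<in>sets N. (\<integral>\<omega>. indicator S (g \<omega>) * f \<omega> \<partial>M) = (\<integral>\<omega>. indicator S (g \<omega>) * h (g \<omega>) \<partial>M))"

definition obs_law :: "('x::topological_space, 'w::topological_space) obs measure \<Rightarrow> bool" where
  "obs_law P \<longleftrightarrow> prob_space P \<and> sets P = sets obsM \<and> integrable P oY"

definition Q_version ::
  "('x::topological_space, 'w::topological_space) obs measure \<Rightarrow> (bool \<times> 'w \<times> 'x \<Rightarrow> real) \<Rightarrow> bool" where
  "Q_version P Q \<longleftrightarrow>
     cond_exp_version P (count_space UNIV \<Otimes>\<^sub>M (borel \<Otimes>\<^sub>M borel)) (\<lambda>\<omega>. (oA \<omega>, oW \<omega>, oX \<omega>)) oY Q"

definition Delta :: "(bool \<times> 'w \<times> 'x \<Rightarrow> real) \<Rightarrow> 'w \<Rightarrow> 'x \<Rightarrow> real" where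
  "Delta Q w x = Q (True, w, x) - Q (False, w, x)"

definition positivity :: "('x::topological_space, 'w::topological_space) obs measure \<Rightarrow> bool" where
  "positivity P \<longleftrightarrow> (\<exists>e. cond_exp_version P (borel \<Otimes>\<^sub>M borel) (\<lambda>\<omega>. (oX \<omega>, oW \<omega>))
        (\<lambda>\<omega>. if oA \<omega> then 1 else 0) e \<and>
      (AE \<omega> in P. 0 < e (oX \<omega>, oW \<omega>) \<and> e (oX \<omega>, oW \<omega>) < 1))"

definition psi :: "('x, 'w) obs measure \<Rightarrow> (bool \<times> 'w \<times> 'x \<Rightarrow> real) \<Rightarrow> real" where
  "psi P Q = (\<integral>\<omega>. Delta Q (oW \<omega>) (oX \<omega>) \<partial>P)"

definition Psi :: "(('x, 'w) obs measure \<Rightarrow> 'x \<Rightarrow> 'w measure) \<Rightarrow> ('x, 'w) obs measure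
                    \<Rightarrow> (bool \<times> 'w \<times> 'x \<Rightarrow> real) \<Rightarrow> real" where
  "Psi \<nu> P Q = (\<integral>\<omega>. (\<integral>w. Delta Q w (oX \<omega>) \<partial>(\<nu> P (oX \<omega>))) \<partial>P)"

definition cond_law_version ::
  "('x::topological_space, 'w::topological_space) obs measure \<Rightarrow> ('x \<Rightarrow> 'w measure) \<Rightarrow> bool" where
  "cond_law_version P K \<longleftrightarrow> K \<in> borel \<rightarrow>\<^sub>M prob_algebra borel \<and>
     (\<forall>B\<in>sets (borel :: 'x measure). \<forall>C\<in>sets (borel :: 'w measure).
        measure P {\<omega>\<in>space P. oX \<omega> \<in> B \<and> oW \<omega> \<in> C}
          = (\<integral>\<omega>. indicator B (oX \<omega>) * measure (K (oX \<omega>)) C \<partial>P))"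

definition outcome_free ::
  "(('x::topological_space, 'w::topological_space) obs measure \<Rightarrow> 'x \<Rightarrow> 'w measure) \<Rightarrow> bool" where
  "outcome_free \<nu> \<longleftrightarrow> (\<forall>P P'. obs_law P \<longrightarrow> obs_law P' \<longrightarrow>
       distr P XAWM oXAW = distr P' XAWM oXAW \<longrightarrow>
       (AE x in distr P borel oX. \<nu> P x = \<nu> P' x))"

definition full_law :: "('x::topological_space, 'w::topological_space) full measure \<Rightarrow> bool" where
  "full_law Pf \<longleftrightarrow> prob_space Pf \<and> sets Pf = sets fullM \<and>
     integrable Pf fY \<and> integrable Pf fY0 \<and> integrable Pf fY1"

definition consistency :: "('x, 'w) full measure \<Rightarrow> bool" where
  "consistency Pf \<longleftrightarrow> (AE \<omega> in Pf. (fA \<omega> \<longrightarrow> fY \<omega> = fY1 \<omega>) \<and> (\<not> fA \<omega> \<longrightarrow> fY \<omega> = fY0 \<omega>))"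

text \<open>Ya independent of A given (X,W) (A binary, so the event {A} generates sigma(A)).\<close>
definition cond_indep_A ::
  "('x::topological_space, 'w::topological_space) full measure \<Rightarrow> (('x,'w) full \<Rightarrow> real) \<Rightarrow> bool" where
  "cond_indep_A Pf Ya \<longleftrightarrow> (\<forall>B\<in>sets (borel :: real measure). \<exists>h1 h2 h12.
      cond_exp_version Pf (borel \<Otimes>\<^sub>M borel) (\<lambda>\<omega>. (fX \<omega>, fW \<omega>)) (\<lambda>\<omega>. indicator B (Ya \<omega>)) h1 \<and>
      cond_exp_version Pf (borel \<Otimes>\<^sub>M borel) (\<lambda>\<omega>. (fX \<omega>, fW \<omega>)) (\<lambda>\<omega>. if fA \<omega> then 1 else 0) h2 \<and>
      cond_exp_version Pf (borel \<Otimes>\<^sub>M borel) (\<lambda>\<omega>. (fX \<omega>, fW \<omega>))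
          (\<lambda>\<omega>. indicator B (Ya \<omega>) * (if fA \<omega> then 1 else 0)) h12 \<and>
      (AE \<omega> in Pf. h12 (fX \<omega>, fW \<omega>) = h1 (fX \<omega>, fW \<omega>) * h2 (fX \<omega>, fW \<omega>)))"

definition confounder_model :: "('x::topological_space, 'w::topological_space) full measure \<Rightarrow> bool" where
  "confounder_model Pf \<longleftrightarrow> full_law Pf \<and> consistency Pf \<and> cond_indep_A Pf fY0 \<and> cond_indep_A Pf fY1"

definition obs_law_of :: "('x::topological_space, 'w::topological_space) full measure \<Rightarrow> ('x,'w) obs measure" where
  "obs_law_of Pf = distr Pf obsM obs_of"

definition ATE :: "('x, 'w) full measure \<Rightarrow> real" where
  "ATE Pf = (\<integral>\<omega>. fY1 \<omega> - fY0 \<omega> \<partial>Pf)"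

end

theory Submission
  imports Defs
begin

(* Fix an observed law P and a measurable g(w, x) with g(W, X) integrable. Keeping (X, A, W)
   from P and setting Y0 = 0, Y1 = g(W, X), Y = A g(W, X) gives a full-data law in which both
   potential outcomes are functions of (X, W), so it lies in the confounder model; its observed
   law P' is positive, has the (X, A, W)-marginal of P, and regression Q(a, w, x) = a g(w, x),
   whence Delta = g. The ATE hypothesis gives Psi(P') = E_P g(W, X), and outcome-freeness lets
   us replace nu_P' by nu_P. So E_P of the nu_P(. | X)-integral of g(., X) equals E_P g(W, X)
   for every such g: indicators 1_B(x) 1_C(w) identify nu_P as the conditional law of W given X,
   and g = Delta gives Psi(P) = psi(P). *)

lemma obs_projections_measurable:
  assumes "sets M = sets obsM"
  shows "oX \<in> M \<rightarrow>\<^sub>M borel" "oA \<in> M \<rightarrow>\<^sub>M count_space UNIV"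
    "oW \<in> M \<rightarrow>\<^sub>M borel" "oY \<in> M \<rightarrow>\<^sub>M borel"
proof -
  have projections: "oX = fst" "oA = fst \<circ> snd" "oW = fst \<circ> snd \<circ> snd" "oY = snd \<circ> snd \<circ> snd"
    by (auto simp: oX_def oA_def oW_def oY_def)
  show "oX \<in> M \<rightarrow>\<^sub>M borel" "oA \<in> M \<rightarrow>\<^sub>M count_space UNIV"
    "oW \<in> M \<rightarrow>\<^sub>M borel" "oY \<in> M \<rightarrow>\<^sub>M borel"
    unfolding projections by (simp_all add: measurable_cong_sets[OF assms refl] obsM_def)
qed

lemmas measurable_obs_projections[measurable] = obs_projections_measurable[OF refl]

lemma measurable_full_projections[measurable]:
  "fX \<in> fullM \<rightarrow>\<^sub>M borel" "fA \<in> fullM \<rightarrow>\<^sub>M count_space UNIV" "fW \<in> fullM \<rightarrow>\<^sub>M borel"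
  "fY \<in> fullM \<rightarrow>\<^sub>M borel" "fY0 \<in> fullM \<rightarrow>\<^sub>M borel" "fY1 \<in> fullM \<rightarrow>\<^sub>M borel"
proof -
  have projections: "fX = fst" "fA = fst \<circ> snd" "fW = fst \<circ> snd \<circ> snd"
    "fY = fst \<circ> snd \<circ> snd \<circ> snd" "fY0 = fst \<circ> snd \<circ> snd \<circ> snd \<circ> snd"
    "fY1 = snd \<circ> snd \<circ> snd \<circ> snd \<circ> snd"
    by (auto simp: fX_def fA_def fW_def fY_def fY0_def fY1_def)
  show "fX \<in> fullM \<rightarrow>\<^sub>M borel" "fA \<in> fullM \<rightarrow>\<^sub>M count_space UNIV" "fW \<in> fullM \<rightarrow>\<^sub>M borel"
    "fY \<in> fullM \<rightarrow>\<^sub>M borel" "fY0 \<in> fullM \<rightarrow>\<^sub>M borel" "fY1 \<in> fullM \<rightarrow>\<^sub>M borel"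
    unfolding projections by (simp_all add: fullM_def)
qed

lemma measurable_obs_of[measurable]: "obs_of \<in> fullM \<rightarrow>\<^sub>M obsM"
proof -
  have components: "obs_of = (\<lambda>\<omega>. (fX \<omega>, fA \<omega>, fW \<omega>, fY \<omega>))"
    by (auto simp: obs_of_def fX_def fA_def fW_def fY_def)
  show ?thesis unfolding components obsM_def by measurable
qed

lemma measurable_oXAW[measurable]: "oXAW \<in> obsM \<rightarrow>\<^sub>M XAWM"
proof -
  have components: "oXAW = (\<lambda>\<omega>. (oX \<omega>, oA \<omega>, oW \<omega>))"
    by (auto simp: oXAW_def oX_def oA_def oW_def)
  show ?thesis unfolding components XAWM_def by measurable
qed

lemma integral_measurable_subprob_algebra2:
  fixes f :: "'a \<Rightarrow> 'b \<Rightarrow> 'c::{banach, second_countable_topology}"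
  assumes f[measurable]: "(\<lambda>(x, y). f x y) \<in> borel_measurable (M \<Otimes>\<^sub>M N)"
    and L[measurable]: "L \<in> M \<rightarrow>\<^sub>M subprob_algebra N"
  shows "(\<lambda>x. integral\<^sup>L (L x) (f x)) \<in> borel_measurable M"
proof -
  note measurable_distr2[measurable]
  have "(\<lambda>x. integral\<^sup>L (distr (L x) (M \<Otimes>\<^sub>M N) (\<lambda>y. (x, y))) (\<lambda>(x, y). f x y)) \<in> borel_measurable M"
    by measurable
  then show ?thesis
    by (rule measurable_cong[THEN iffD1, rotated])
      (auto simp: integral_distr measurable_space[OF L] space_subprob_algebra)
qed

lemma cond_exp_version_distr:
  assumes T[measurable]: "T \<in> P \<rightarrow>\<^sub>M M" and G[measurable]: "G \<in> M \<rightarrow>\<^sub>M N"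
    and f[measurable]: "f \<in> borel_measurable M"
    and version: "cond_exp_version P N (\<lambda>\<omega>. G (T \<omega>)) (\<lambda>\<omega>. f (T \<omega>)) h"
  shows "cond_exp_version (distr P M T) N G f h"
proof -
  from version have h[measurable]: "h \<in> borel_measurable N"
    and integrable: "integrable P (\<lambda>\<omega>. h (G (T \<omega>)))"
    and eq: "\<And>S. S \<in> sets N \<Longrightarrow> (\<integral>\<omega>. indicator S (G (T \<omega>)) * f (T \<omega>) \<partial>P)
                                  = (\<integral>\<omega>. indicator S (G (T \<omega>)) * h (G (T \<omega>)) \<partial>P)"
    unfolding cond_exp_version_def by auto
  have "integrable (distr P M T) (\<lambda>\<omega>. h (G \<omega>))"
    using integrable by (subst integrable_distr_eq) simp_all
  moreover have "(\<integral>\<omega>. indicator S (G \<omega>) * f \<omega> \<partial>distr P M T)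
      = (\<integral>\<omega>. indicator S (G \<omega>) * h (G \<omega>) \<partial>distr P M T)" if S[measurable]: "S \<in> sets N" for S
    using eq[OF S] by (simp add: integral_distr)
  ultimately show ?thesis unfolding cond_exp_version_def by simp
qed

lemma cond_exp_version_function:
  assumes "h \<in> borel_measurable N" "integrable P (\<lambda>\<omega>. h (G \<omega>))"
  shows "cond_exp_version P N G (\<lambda>\<omega>. h (G \<omega>)) h"
  using assms unfolding cond_exp_version_def by simp

lemma cond_exp_version_indicator_mult:
  assumes version: "cond_exp_version P N G f h" and K: "K \<in> sets N" and G: "G \<in> P \<rightarrow>\<^sub>M N"
  shows "cond_exp_version P N G (\<lambda>\<omega>. indicator K (G \<omega>) * f \<omega>) (\<lambda>y. indicator K y * h y)"
proof -
  from version have h: "h \<in> borel_measurable N" and integrable: "integrable P (\<lambda>\<omega>. h (G \<omega>))"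
    and eq: "\<And>S. S \<in> sets N \<Longrightarrow> (\<integral>\<omega>. indicator S (G \<omega>) * f \<omega> \<partial>P)
                                  = (\<integral>\<omega>. indicator S (G \<omega>) * h (G \<omega>) \<partial>P)"
    unfolding cond_exp_version_def by auto
  have hK: "(\<lambda>y. indicator K y * h y) \<in> borel_measurable N"
    using h K by measurable
  have "integrable P (\<lambda>\<omega>. indicator K (G \<omega>) * h (G \<omega>))"
    by (rule Bochner_Integration.integrable_bound[OF integrable])
      (use measurable_comp[OF G hK] in \<open>auto simp: comp_def indicator_def\<close>)
  moreover have "(\<integral>\<omega>. indicator S (G \<omega>) * (indicator K (G \<omega>) * f \<omega>) \<partial>P)
      = (\<integral>\<omega>. indicator S (G \<omega>) * (indicator K (G \<omega>) * h (G \<omega>)) \<partial>P)" if "S \<in> sets N" for S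
    using eq[of "S \<inter> K"] that K by (simp add: indicator_inter_arith mult.assoc)
  ultimately show ?thesis unfolding cond_exp_version_def using hK by blast
qed

lemma cond_exp_version_AE_cong:
  assumes version: "cond_exp_version P N G f h" and G: "G \<in> P \<rightarrow>\<^sub>M N"
    and f: "f \<in> borel_measurable P" "f' \<in> borel_measurable P"
    and eq: "AE \<omega> in P. f \<omega> = f' \<omega>"
  shows "cond_exp_version P N G f' h"
proof -
  have "(\<integral>\<omega>. indicator S (G \<omega>) * f \<omega> \<partial>P) = (\<integral>\<omega>. indicator S (G \<omega>) * f' \<omega> \<partial>P)"
    if "S \<in> sets N" for S
    using that G f eq by (intro integral_cong_AE) (auto elim: eventually_mono)
  then show ?thesis
    using version unfolding cond_exp_version_def by simp
qed

lemma cond_indep_A_function_of_XW: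
  fixes Pf :: "('x::topological_space, 'w::topological_space) full measure"
  assumes prob: "prob_space Pf" and sets_Pf: "sets Pf = sets fullM"
    and propensity: "cond_exp_version Pf (borel \<Otimes>\<^sub>M borel) (\<lambda>\<omega>. (fX \<omega>, fW \<omega>))
                       (\<lambda>\<omega>. if fA \<omega> then 1 else 0) e"
    and \<phi>[measurable]: "\<phi> \<in> borel_measurable (borel \<Otimes>\<^sub>M borel)"
    and Ya[measurable]: "Ya \<in> borel_measurable Pf"
    and Ya_eq: "AE \<omega> in Pf. Ya \<omega> = \<phi> (fX \<omega>, fW \<omega>)"
  shows "cond_indep_A Pf Ya"
  unfolding cond_indep_A_def
proof
  fix B :: "real set" assume B[measurable]: "B \<in> sets borel"
  have [measurable]: "fX \<in> Pf \<rightarrow>\<^sub>M borel" "fA \<in> Pf \<rightarrow>\<^sub>M count_space UNIV" "fW \<in> Pf \<rightarrow>\<^sub>M borel"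
    using measurable_full_projections by (simp_all add: measurable_cong_sets[OF sets_Pf refl])
  define K where "K = \<phi> -` B"
  have K[measurable]: "K \<in> sets (borel \<Otimes>\<^sub>M borel)"
    using measurable_sets[OF \<phi> B] by (simp add: K_def space_pair_measure)
  have XW: "(\<lambda>\<omega>. (fX \<omega>, fW \<omega>)) \<in> Pf \<rightarrow>\<^sub>M borel \<Otimes>\<^sub>M borel"
    by measurable
  have indicator_Ya: "AE \<omega> in Pf. indicator K (fX \<omega>, fW \<omega>) = indicator B (Ya \<omega>)"
    using Ya_eq by eventually_elim (simp add: K_def indicator_def)
  have "integrable Pf (\<lambda>\<omega>. indicator K (fX \<omega>, fW \<omega>) :: real)"
    by (intro finite_measure.integrable_const_bound[OF prob_space.finite_measure[OF prob], where B=1])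
      (auto simp: indicator_def)
  then have "cond_exp_version Pf (borel \<Otimes>\<^sub>M borel) (\<lambda>\<omega>. (fX \<omega>, fW \<omega>))
      (\<lambda>\<omega>. indicator K (fX \<omega>, fW \<omega>)) (indicator K)"
    by (intro cond_exp_version_function) simp_all
  then have outcome: "cond_exp_version Pf (borel \<Otimes>\<^sub>M borel) (\<lambda>\<omega>. (fX \<omega>, fW \<omega>))
      (\<lambda>\<omega>. indicator B (Ya \<omega>)) (indicator K)"
    by (rule cond_exp_version_AE_cong[OF _ XW]) (use indicator_Ya in simp_all)
  have joint: "cond_exp_version Pf (borel \<Otimes>\<^sub>M borel) (\<lambda>\<omega>. (fX \<omega>, fW \<omega>))
      (\<lambda>\<omega>. indicator B (Ya \<omega>) * (if fA \<omega> then 1 else 0)) (\<lambda>y. indicator K y * e y)"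
    by (rule cond_exp_version_AE_cong[OF cond_exp_version_indicator_mult[OF propensity K XW] XW])
      (use indicator_Ya in \<open>auto elim: eventually_mono\<close>)
  show "\<exists>h1 h2 h12.
      cond_exp_version Pf (borel \<Otimes>\<^sub>M borel) (\<lambda>\<omega>. (fX \<omega>, fW \<omega>)) (\<lambda>\<omega>. indicator B (Ya \<omega>)) h1 \<and>
      cond_exp_version Pf (borel \<Otimes>\<^sub>M borel) (\<lambda>\<omega>. (fX \<omega>, fW \<omega>)) (\<lambda>\<omega>. if fA \<omega> then 1 else 0) h2 \<and>
      cond_exp_version Pf (borel \<Otimes>\<^sub>M borel) (\<lambda>\<omega>. (fX \<omega>, fW \<omega>))
          (\<lambda>\<omega>. indicator B (Ya \<omega>) * (if fA \<omega> then 1 else 0)) h12 \<and>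
      (AE \<omega> in Pf. h12 (fX \<omega>, fW \<omega>) = h1 (fX \<omega>, fW \<omega>) * h2 (fX \<omega>, fW \<omega>))"
    using outcome propensity joint by (intro exI conjI) auto
qed

locale effect_model =
  fixes P :: "('x::topological_space, 'w::topological_space) obs measure"
    and g :: "'w \<Rightarrow> 'x \<Rightarrow> real"
  assumes obs_law: "obs_law P"
    and g_measurable[measurable]: "(\<lambda>(w, x). g w x) \<in> borel_measurable (borel \<Otimes>\<^sub>M borel)"
    and g_integrable: "integrable P (\<lambda>\<omega>. g (oW \<omega>) (oX \<omega>))"
begin

lemma prob_space_P: "prob_space P" and sets_P: "sets P = sets obsM"
  using obs_law by (simp_all add: obs_law_def)

lemmas measurable_P_projections[measurable] = obs_projections_measurable[OF sets_P]

definition effect_data :: "('x, 'w) obs \<Rightarrow> ('x, 'w) full" where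
  "effect_data \<omega> = (oX \<omega>, oA \<omega>, oW \<omega>, if oA \<omega> then g (oW \<omega>) (oX \<omega>) else 0, 0, g (oW \<omega>) (oX \<omega>))"

definition effect_full :: "('x, 'w) full measure" where
  "effect_full = distr P fullM effect_data"

definition effect_obs :: "('x, 'w) obs measure" where
  "effect_obs = distr P obsM (obs_of \<circ> effect_data)"

definition effect_Q :: "bool \<times> 'w \<times> 'x \<Rightarrow> real" where
  "effect_Q = (\<lambda>(a, w, x). if a then g w x else 0)"

lemma measurable_effect_data[measurable]: "effect_data \<in> P \<rightarrow>\<^sub>M fullM"
  unfolding effect_data_def fullM_def by measurable

lemma effect_data_simps[simp]:
  "fX (effect_data \<omega>) = oX \<omega>" "fA (effect_data \<omega>) = oA \<omega>" "fW (effect_data \<omega>) = oW \<omega>"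
  "fY (effect_data \<omega>) = (if oA \<omega> then g (oW \<omega>) (oX \<omega>) else 0)"
  "fY0 (effect_data \<omega>) = 0" "fY1 (effect_data \<omega>) = g (oW \<omega>) (oX \<omega>)"
  "oX (obs_of (effect_data \<omega>)) = oX \<omega>" "oA (obs_of (effect_data \<omega>)) = oA \<omega>"
  "oW (obs_of (effect_data \<omega>)) = oW \<omega>"
  "oY (obs_of (effect_data \<omega>)) = (if oA \<omega> then g (oW \<omega>) (oX \<omega>) else 0)"
  "oXAW (obs_of (effect_data \<omega>)) = oXAW \<omega>"
  by (cases \<omega>; simp add: effect_data_def fX_def fA_def fW_def fY_def fY0_def fY1_def obs_of_def
      oX_def oA_def oW_def oY_def oXAW_def)+

lemma obs_law_of_effect_full: "obs_law_of effect_full = effect_obs"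
  unfolding obs_law_of_def effect_full_def effect_obs_def by (simp add: distr_distr)

lemma integrable_treated_g: "integrable P (\<lambda>\<omega>. if oA \<omega> then g (oW \<omega>) (oX \<omega>) else 0)"
  by (rule Bochner_Integration.integrable_bound[OF g_integrable]) auto

lemma full_law_effect_full: "full_law effect_full"
  unfolding full_law_def effect_full_def
  using prob_space_P integrable_treated_g g_integrable
  by (simp add: prob_space.prob_space_distr integrable_distr_eq)

lemma consistency_effect_full: "consistency effect_full"
proof -
  have "{\<omega> \<in> space fullM. (fA \<omega> \<longrightarrow> fY \<omega> = fY1 \<omega>) \<and> (\<not> fA \<omega> \<longrightarrow> fY \<omega> = fY0 \<omega>)} \<in> sets fullM"
    by measurable
  then show ?thesis
    unfolding consistency_def effect_full_def by (simp add: AE_distr_iff)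
qed

lemma confounder_model_effect_full:
  assumes "positivity P"
  shows "confounder_model effect_full"
proof -
  from assms obtain e where e: "cond_exp_version P (borel \<Otimes>\<^sub>M borel) (\<lambda>\<omega>. (oX \<omega>, oW \<omega>))
      (\<lambda>\<omega>. if oA \<omega> then 1 else 0) e"
    unfolding positivity_def by blast
  have propensity: "cond_exp_version effect_full (borel \<Otimes>\<^sub>M borel) (\<lambda>\<omega>. (fX \<omega>, fW \<omega>))
      (\<lambda>\<omega>. if fA \<omega> then 1 else 0) e"
    unfolding effect_full_def by (rule cond_exp_version_distr) (use e in simp_all)
  have prob: "prob_space effect_full" and sets: "sets effect_full = sets fullM"
    using full_law_effect_full by (simp_all add: full_law_def)
  have potential_outcomes: "AE \<omega> in effect_full. fY0 \<omega> = 0 \<and> fY1 \<omega> = g (fW \<omega>) (fX \<omega>)"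
  proof -
    have "{\<omega> \<in> space fullM. fY0 \<omega> = 0 \<and> fY1 \<omega> = g (fW \<omega>) (fX \<omega>)} \<in> sets fullM"
      by measurable
    then show ?thesis
      unfolding effect_full_def by (simp add: AE_distr_iff)
  qed
  have Y_measurable: "fY0 \<in> borel_measurable effect_full" "fY1 \<in> borel_measurable effect_full"
    by (simp_all add: measurable_cong_sets[OF sets refl])
  have "cond_indep_A effect_full fY0"
    by (rule cond_indep_A_function_of_XW[OF prob sets propensity _ Y_measurable(1), where \<phi>="\<lambda>_. 0"])
      (use potential_outcomes in \<open>simp_all add: eventually_mono\<close>)
  moreover have "cond_indep_A effect_full fY1"
    by (rule cond_indep_A_function_of_XW[OF prob sets propensity _ Y_measurable(2),
          where \<phi>="\<lambda>(x, w). g w x"])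
      (use potential_outcomes in \<open>simp_all add: eventually_mono\<close>)
  ultimately show ?thesis
    unfolding confounder_model_def using full_law_effect_full consistency_effect_full by blast
qed

lemma obs_law_effect_obs: "obs_law effect_obs"
  unfolding obs_law_def effect_obs_def
  using prob_space_P integrable_treated_g
  by (simp add: prob_space.prob_space_distr integrable_distr_eq)

lemma positivity_effect_obs:
  assumes "positivity P"
  shows "positivity effect_obs"
proof -
  from assms obtain e where e: "cond_exp_version P (borel \<Otimes>\<^sub>M borel) (\<lambda>\<omega>. (oX \<omega>, oW \<omega>))
      (\<lambda>\<omega>. if oA \<omega> then 1 else 0) e"
    and overlap: "AE \<omega> in P. 0 < e (oX \<omega>, oW \<omega>) \<and> e (oX \<omega>, oW \<omega>) < 1"
    unfolding positivity_def by blast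
  have e_measurable[measurable]: "e \<in> borel_measurable (borel \<Otimes>\<^sub>M borel)"
    using e by (simp add: cond_exp_version_def)
  have "cond_exp_version effect_obs (borel \<Otimes>\<^sub>M borel) (\<lambda>\<omega>. (oX \<omega>, oW \<omega>))
      (\<lambda>\<omega>. if oA \<omega> then 1 else 0) e"
    unfolding effect_obs_def by (rule cond_exp_version_distr) (use e in simp_all)
  moreover have "AE \<omega> in effect_obs. 0 < e (oX \<omega>, oW \<omega>) \<and> e (oX \<omega>, oW \<omega>) < 1"
  proof -
    have "{\<omega> \<in> space obsM. 0 < e (oX \<omega>, oW \<omega>) \<and> e (oX \<omega>, oW \<omega>) < 1} \<in> sets obsM"
      by measurable
    then show ?thesis
      unfolding effect_obs_def using overlap by (simp add: AE_distr_iff)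
  qed
  ultimately show ?thesis
    unfolding positivity_def by blast
qed

lemma XAW_marginal_effect_obs: "distr effect_obs XAWM oXAW = distr P XAWM oXAW"
proof -
  have "oXAW \<circ> (obs_of \<circ> effect_data) = oXAW" by auto
  then show ?thesis
    unfolding effect_obs_def by (simp add: distr_distr)
qed

lemma measurable_effect_Q: "effect_Q \<in> borel_measurable (count_space UNIV \<Otimes>\<^sub>M (borel \<Otimes>\<^sub>M borel))"
  unfolding effect_Q_def split_beta by measurable

lemma Q_version_effect_obs: "Q_version effect_obs effect_Q"
proof -
  have "cond_exp_version P (count_space UNIV \<Otimes>\<^sub>M (borel \<Otimes>\<^sub>M borel)) (\<lambda>\<omega>. (oA \<omega>, oW \<omega>, oX \<omega>))
      (\<lambda>\<omega>. effect_Q (oA \<omega>, oW \<omega>, oX \<omega>)) effect_Q"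
    using integrable_treated_g
    by (intro cond_exp_version_function[OF measurable_effect_Q]) (simp add: effect_Q_def)
  then show ?thesis
    unfolding Q_version_def effect_obs_def
    by (intro cond_exp_version_distr) (simp_all add: effect_Q_def)
qed

lemma ATE_effect_full: "ATE effect_full = (\<integral>\<omega>. g (oW \<omega>) (oX \<omega>) \<partial>P)"
  unfolding ATE_def effect_full_def by (simp add: integral_distr)

lemma Delta_effect_Q[simp]: "Delta effect_Q w x = g w x"
  by (simp add: Delta_def effect_Q_def)

end

lemma Psi_eq_if_XAW_marginal_eq:
  fixes \<nu> :: "('x::topological_space, 'w::topological_space) obs measure \<Rightarrow> 'x \<Rightarrow> 'w measure"
  assumes kernel: "\<forall>P'. obs_law P' \<longrightarrow> \<nu> P' \<in> borel \<rightarrow>\<^sub>M prob_algebra borel"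
    and outcome_free: "outcome_free \<nu>"
    and obs: "obs_law P" "obs_law P'"
    and marginal: "distr P' XAWM oXAW = distr P XAWM oXAW"
    and Q[measurable]: "Q \<in> borel_measurable (count_space UNIV \<Otimes>\<^sub>M (borel \<Otimes>\<^sub>M borel))"
  shows "Psi \<nu> P' Q = Psi \<nu> P Q"
proof -
  have sets: "sets P = sets obsM" "sets P' = sets obsM"
    using obs by (simp_all add: obs_law_def)
  note [measurable] = obs_projections_measurable[OF sets(1)] obs_projections_measurable[OF sets(2)]
  have oX_via_oXAW: "oX = fst \<circ> oXAW"
    by (auto simp: oX_def oXAW_def)
  have fst_measurable: "fst \<in> XAWM \<rightarrow>\<^sub>M (borel :: 'x measure)"
    unfolding XAWM_def by measurable
  have X_marginal: "distr P' borel oX = distr P borel oX"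
    using marginal unfolding oX_via_oXAW
    by (simp add: distr_distr[OF fst_measurable, symmetric] measurable_cong_sets[OF sets(1) refl]
        measurable_cong_sets[OF sets(2) refl])
  have nu_eq: "AE x in distr P borel oX. \<nu> P x = \<nu> P' x"
    using outcome_free obs marginal unfolding outcome_free_def by metis
  define F where "F K x = (\<integral>w. Delta Q w x \<partial>K x)" for K :: "'x \<Rightarrow> 'w measure" and x
  have Delta_measurable: "(\<lambda>(x, w). Delta Q w x) \<in> borel_measurable (borel \<Otimes>\<^sub>M borel)"
    unfolding Delta_def by measurable
  have F_measurable[measurable]: "F (\<nu> P) \<in> borel_measurable borel" "F (\<nu> P') \<in> borel_measurable borel"
    using kernel obs unfolding F_def
    by (auto intro!: integral_measurable_subprob_algebra2[OF Delta_measurable] measurable_prob_algebraD)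
  have "Psi \<nu> P' Q = (\<integral>\<omega>. F (\<nu> P') (oX \<omega>) \<partial>P')"
    unfolding Psi_def F_def ..
  also have "\<dots> = (\<integral>x. F (\<nu> P') x \<partial>distr P' borel oX)"
    by (simp add: integral_distr)
  also have "\<dots> = (\<integral>x. F (\<nu> P) x \<partial>distr P borel oX)"
    unfolding X_marginal
  proof (rule integral_cong_AE)
    show "F (\<nu> P') \<in> borel_measurable (distr P borel oX)" "F (\<nu> P) \<in> borel_measurable (distr P borel oX)"
      using F_measurable by simp_all
    show "AE x in distr P borel oX. F (\<nu> P') x = F (\<nu> P) x"
      using nu_eq by eventually_elim (simp add: F_def)
  qed
  also have "\<dots> = (\<integral>\<omega>. F (\<nu> P) (oX \<omega>) \<partial>P)"
    by (simp add: integral_distr)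
  also have "\<dots> = Psi \<nu> P Q"
    unfolding Psi_def F_def ..
  finally show ?thesis .
qed

lemma integral_nu_eq_integral_W:
  fixes \<nu> :: "('x::topological_space, 'w::topological_space) obs measure \<Rightarrow> 'x \<Rightarrow> 'w measure"
    and g :: "'w \<Rightarrow> 'x \<Rightarrow> real"
  assumes kernel: "\<forall>P'. obs_law P' \<longrightarrow> \<nu> P' \<in> borel \<rightarrow>\<^sub>M prob_algebra borel"
    and outcome_free: "outcome_free \<nu>"
    and ate: "\<forall>Pf. confounder_model Pf \<and> positivity (obs_law_of Pf) \<longrightarrow>
                (\<forall>Q. Q_version (obs_law_of Pf) Q \<longrightarrow> Psi \<nu> (obs_law_of Pf) Q = ATE Pf)"
    and obs: "obs_law P"
    and pos: "positivity P"
    and g: "(\<lambda>(w, x). g w x) \<in> borel_measurable (borel \<Otimes>\<^sub>M borel)"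
           "integrable P (\<lambda>\<omega>. g (oW \<omega>) (oX \<omega>))"
  shows "(\<integral>\<omega>. (\<integral>w. g w (oX \<omega>) \<partial>\<nu> P (oX \<omega>)) \<partial>P) = (\<integral>\<omega>. g (oW \<omega>) (oX \<omega>) \<partial>P)"
proof -
  interpret effect_model P g
    using obs g by unfold_locales
  have "(\<integral>\<omega>. (\<integral>w. g w (oX \<omega>) \<partial>\<nu> P (oX \<omega>)) \<partial>P) = Psi \<nu> P effect_Q"
    by (simp add: Psi_def)
  also have "\<dots> = Psi \<nu> effect_obs effect_Q"
    using kernel outcome_free obs obs_law_effect_obs XAW_marginal_effect_obs measurable_effect_Q
    by (intro Psi_eq_if_XAW_marginal_eq[symmetric])
  also have "\<dots> = ATE effect_full"
    using ate confounder_model_effect_full[OF pos] positivity_effect_obs[OF pos] Q_version_effect_obs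
    by (metis obs_law_of_effect_full)
  also have "\<dots> = (\<integral>\<omega>. g (oW \<omega>) (oX \<omega>) \<partial>P)"
    by (rule ATE_effect_full)
  finally show ?thesis .
qed

lemma cond_law_versionI:
  fixes P :: "('x::topological_space, 'w::topological_space) obs measure"
  assumes prob: "prob_space P" and sets: "sets P = sets obsM"
    and K: "K \<in> borel \<rightarrow>\<^sub>M prob_algebra borel"
    and integral_K: "\<And>g :: 'w \<Rightarrow> 'x \<Rightarrow> real.
           (\<lambda>(w, x). g w x) \<in> borel_measurable (borel \<Otimes>\<^sub>M borel) \<Longrightarrow>
           integrable P (\<lambda>\<omega>. g (oW \<omega>) (oX \<omega>)) \<Longrightarrow>
           (\<integral>\<omega>. (\<integral>w. g w (oX \<omega>) \<partial>K (oX \<omega>)) \<partial>P) = (\<integral>\<omega>. g (oW \<omega>) (oX \<omega>) \<partial>P)"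
  shows "cond_law_version P K"
  unfolding cond_law_version_def
proof (intro conjI K ballI)
  fix B :: "'x set" and C :: "'w set"
  assume [measurable]: "B \<in> sets borel" "C \<in> sets borel"
  note [measurable] = obs_projections_measurable[OF sets]
  define E where "E = {\<omega> \<in> space P. oX \<omega> \<in> B \<and> oW \<omega> \<in> C}"
  have E[measurable]: "E \<in> sets P"
    unfolding E_def by measurable
  have E_indicator: "indicator C (oW \<omega>) * indicator B (oX \<omega>) = (indicator E \<omega> :: real)"
    if "\<omega> \<in> space P" for \<omega>
    using that by (auto simp: E_def indicator_def)
  have integrable: "integrable P (\<lambda>\<omega>. indicator C (oW \<omega>) * indicator B (oX \<omega>) :: real)"
    by (intro finite_measure.integrable_const_bound[OF prob_space.finite_measure[OF prob], where B=1])
      (auto simp: indicator_def)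
  have K_x: "sets (K x) = sets borel" "prob_space (K x)" for x
    using measurable_space[OF K, of x] by (simp_all add: space_prob_algebra)
  have inner: "(\<integral>w. indicator C w * indicator B x \<partial>K x) = indicator B x * measure (K x) C" for x
    using K_x[of x]
    by (simp add: less_top[symmetric] finite_measure.emeasure_finite prob_space.finite_measure)
  have "measure P E = (\<integral>\<omega>. indicator E \<omega> \<partial>P)"
    using E prob_space.finite_measure[OF prob]
    by (simp add: finite_measure.emeasure_finite less_top[symmetric])
  also have "\<dots> = (\<integral>\<omega>. indicator C (oW \<omega>) * indicator B (oX \<omega>) \<partial>P)"
    by (rule Bochner_Integration.integral_cong[OF refl E_indicator[symmetric]])
  also have "\<dots> = (\<integral>\<omega>. (\<integral>w. indicator C w * indicator B (oX \<omega>) \<partial>K (oX \<omega>)) \<partial>P)"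
    using integral_K[of "\<lambda>w x. indicator C w * indicator B x"] integrable by simp
  also have "\<dots> = (\<integral>\<omega>. indicator B (oX \<omega>) * measure (K (oX \<omega>)) C \<partial>P)"
    by (simp only: inner)
  finally show "measure P E = (\<integral>\<omega>. indicator B (oX \<omega>) * measure (K (oX \<omega>)) C \<partial>P)" .
qed

theorem theorem4:
  fixes \<nu> :: "('x::topological_space, 'w::topological_space) obs measure \<Rightarrow> 'x \<Rightarrow> 'w measure"
    and P :: "('x, 'w) obs measure"
  assumes kernel: "\<forall>P'. obs_law P' \<longrightarrow> \<nu> P' \<in> borel \<rightarrow>\<^sub>M prob_algebra borel"
    and outcome_free: "outcome_free \<nu>"
    and ate: "\<forall>Pf. confounder_model Pf \<and> positivity (obs_law_of Pf) \<longrightarrow>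
                (\<forall>Q. Q_version (obs_law_of Pf) Q \<longrightarrow> Psi \<nu> (obs_law_of Pf) Q = ATE Pf)"
    and obs: "obs_law P"
    and pos: "positivity P"
  shows "cond_law_version P (\<nu> P) \<and>
         (\<forall>Q. Q_version P Q \<and> integrable P (\<lambda>\<omega>. Delta Q (oW \<omega>) (oX \<omega>))
                \<longrightarrow> Psi \<nu> P Q = psi P Q)"
proof (intro conjI allI impI)
  show "cond_law_version P (\<nu> P)"
    using obs kernel integral_nu_eq_integral_W[OF kernel outcome_free ate obs pos]
    by (intro cond_law_versionI) (auto simp: obs_law_def)
next
  fix Q assume Q: "Q_version P Q \<and> integrable P (\<lambda>\<omega>. Delta Q (oW \<omega>) (oX \<omega>))"
  then have [measurable]: "Q \<in> borel_measurable (count_space UNIV \<Otimes>\<^sub>M (borel \<Otimes>\<^sub>M borel))"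
    by (simp add: Q_version_def cond_exp_version_def)
  have "(\<lambda>(w, x). Delta Q w x) \<in> borel_measurable (borel \<Otimes>\<^sub>M borel)"
    unfolding Delta_def by measurable
  then show "Psi \<nu> P Q = psi P Q"
    unfolding Psi_def psi_def using Q
    by (intro integral_nu_eq_integral_W[OF kernel outcome_free ate obs pos]) auto
qed

end
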